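(* Consider the interior permanent magnet synchronous machine (IPMSM) model in the stator frame with state $x=(i_\alpha,i_\beta,\omega,\theta)^T$, input $u=\mathcal{V}=(v_\alpha,v_\beta)^T$ and output $y=h(x)=\mathcal{I}=(i_\alpha,i_\beta)^T$: \[ \frac{d\mathcal{I}}{dt}=\mathfrak{L}(\theta)^{-1}\Big(\mathcal{V}-\big(R\,\mathbb{I}_2+\omega\,\mathfrak{L}'(\theta)\big)\mathcal{I}-\psi_r\,\mathcal{C}'(\theta)\,\omega\Big),\qquad \frac{d\omega}{dt}=\frac{p}{J}(T_m-T_l),\qquad \frac{d\theta}{dt}=\omega, \] where $\mathfrak{L}(\theta)=\begin{bmatrix}L_0+L_2\cos2\theta & L_2\sin 2\theta\\ L_2\sin2\theta & L_0-L_2\cos2\theta\end{bmatrix}$, $\mathfrak{L}'=\partial\mathfrak{L}/\partial\theta$, $\mathcal{C}'(\theta)=(-\sin\theta,\cos\theta)^T$, and $T_m=\frac{3p}{2}\big[\psi_r(i_\beta\cos\theta-i_\alpha\sin\theta)-L_2\big((i_\alpha^2-i_\beta^2)\sin2\theta-2i_\alpha i_\beta\cos2\theta\big)\big]$. Let $L_d=L_0+L_2$, $L_q=L_0-L_2$ (both nonzero), $L_\delta=L_d-L_q=2L_2$, and let $i_d=i_\alpha\cos\theta+i_\beta\sin\theta$, $i_q=-i_\alpha\sin\theta+i_\beta\cos\theta$ be the rotor-frame currents, with $\frac{di_d}{dt},\frac{di_q}{dt}$ their time derivatives along the model. Let $\Delta_{y1}$ be the determinant of the $4\times4$ matrix $\frac{\partial}{\partial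 x}\begin{bmatrix} h(x)\\ \mathcal{L}_f h(x)\end{bmatrix}$ (gradient of the output and of its first time derivative). Then \[ \Delta_{y1}=\frac{1}{L_dL_q}\Big[(L_\delta i_d+\psi_r)^2+L_\delta^2 i_q^2\Big]\omega+\frac{L_\delta}{L_dL_q}\Big[L_\delta\frac{di_d}{dt}\,i_q-(L_\delta i_d+\psi_r)\frac{di_q}{dt}\Big]. \] Consequently, defining the observability vector $\Psi_{\mathcal O}$ with rotor-frame components $\Psi_{\mathcal{O}d}=L_\delta i_d+\psi_r$, $\Psi_{\mathcal{O}q}=L_\delta i_q$, and its phase $\theta_{\mathcal O}=\arctan\!\big(\frac{L_\delta i_q}{L_\delta i_d+\psi_r}\big)$ in the rotor frame, at any state where $\Psi_{\mathcal O}\neq0$ and \[ \omega\neq\frac{d}{dt}\theta_{\mathcal O}, \] the observability rank condition holds and the IPMSM is locally weakly observable there. In particular, at standstill ($\omega=0$) local observability is guaranteed if $\Psi_{\mathcal O}$ changes its orientation in the rotor frame.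
   Context: For a system $\dot x=f(x,u)$, $y=h(x)$ with $x\in\mathbb{R}^n$, the Lie derivatives are $\mathcal{L}_f^0h=h$, $\mathcal{L}_fh=\frac{\partial h}{\partial x}f$, $\mathcal{L}_f^kh=\mathcal{L}_f\mathcal{L}_f^{k-1}h$. The system satisfies the observability rank condition at $x_0$ if the matrix $\frac{\partial}{\partial x}[\mathcal{L}_f^0h;\mathcal{L}_fh;\dots;\mathcal{L}_f^{n-1}h]$ at $x_0$ has full rank $n$; this implies local weak observability at $x_0$ (Hermann–Krener). Here $R$ is the stator winding resistance, $\psi_r$ the rotor permanent-magnet flux, $p$ the number of pole pairs, $J$ the inertia, $T_l$ the load torque, $\omega$ the electrical rotor speed and $\theta$ the electrical rotor position; $\mathbb{I}_2$ is the $2\times2$ identity. *)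

theory Defs
  imports "HOL-Analysis.Analysis"
begin

definition lie :: "('a::real_normed_vector \<Rightarrow> 'a) \<Rightarrow> ('a \<Rightarrow> 'b::real_normed_vector) \<Rightarrow> 'a \<Rightarrow> 'b" where
  "lie F g x = frechet_derivative g (at x) (F x)"

fun lie_iter :: "('a::real_normed_vector \<Rightarrow> 'a) \<Rightarrow> ('a \<Rightarrow> 'b::real_normed_vector) \<Rightarrow> nat \<Rightarrow> 'a \<Rightarrow> 'b" where
  "lie_iter F g 0 = g"
| "lie_iter F g (Suc k) = lie F (lie_iter F g k)"

text \<open>Observability rank condition at x0: the matrix obtained by stacking the Jacobians
  of L_F^0 h, ..., L_F^(n-1) h at x0 has rank n (rank = dimension of the row space,
  i.e. of the span of all rows of all stacked blocks).\<close>
definition obs_rank_condition :: "(real^'n \<Rightarrow> real^'n) \<Rightarrow> (real^'n \<Rightarrow> real^'m) \<Rightarrow> real^'n \<Rightarrow> bool" where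
  "obs_rank_condition F h x0 \<longleftrightarrow>
     dim (\<Union>k<CARD('n). rows (jacobian (lie_iter F h k) (at x0))) = CARD('n)"

text \<open>IPMSM model in the stator frame. State x = (i_alpha, i_beta, omega, theta),
  i.e. x$1 = i_alpha, x$2 = i_beta, x$3 = omega, x$4 = theta; input u = V = (v_alpha, v_beta).\<close>

definition Lmat :: "real \<Rightarrow> real \<Rightarrow> real \<Rightarrow> real^2^2" where
  "Lmat L0 L2 \<theta> = vector [vector [L0 + L2 * cos (2*\<theta>), L2 * sin (2*\<theta>)],
                             vector [L2 * sin (2*\<theta>), L0 - L2 * cos (2*\<theta>)]]"

definition dLmat :: "real \<Rightarrow> real \<Rightarrow> real^2^2" where
  "dLmat L2 \<theta> = vector [vector [- 2 * L2 * sin (2*\<theta>), 2 * L2 * cos (2*\<theta>)],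
                          vector [2 * L2 * cos (2*\<theta>), 2 * L2 * sin (2*\<theta>)]]"

definition Cp :: "real \<Rightarrow> real^2" where
  "Cp \<theta> = vector [- sin \<theta>, cos \<theta>]"

definition Tm :: "real \<Rightarrow> real \<Rightarrow> real \<Rightarrow> real^4 \<Rightarrow> real" where
  "Tm p \<psi>r L2 x = 3 * p / 2 *
     (\<psi>r * (x$2 * cos (x$4) - x$1 * sin (x$4))
      - L2 * ((x$1^2 - x$2^2) * sin (2 * x$4) - 2 * x$1 * x$2 * cos (2 * x$4)))"

definition ipmsm_f :: "real \<Rightarrow> real \<Rightarrow> real \<Rightarrow> real \<Rightarrow> real \<Rightarrow> real \<Rightarrow> real \<Rightarrow>
                       real^4 \<Rightarrow> real^2 \<Rightarrow> real^4" where
  "ipmsm_f R \<psi>r p J Tl L0 L2 x u =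
     (let I = (vector [x$1, x$2] :: real^2); \<omega> = x$3; \<theta> = x$4;
          dI = matrix_inv (Lmat L0 L2 \<theta>) *v
                 (u - (R *\<^sub>R I + \<omega> *\<^sub>R (dLmat L2 \<theta> *v I)) - (\<psi>r * \<omega>) *\<^sub>R Cp \<theta>)
      in vector [dI$1, dI$2, p / J * (Tm p \<psi>r L2 x - Tl), \<omega>])"

definition ipmsm_h :: "real^4 \<Rightarrow> real^2" where
  "ipmsm_h x = vector [x$1, x$2]"

definition i_d :: "real^4 \<Rightarrow> real" where
  "i_d x = x$1 * cos (x$4) + x$2 * sin (x$4)"

definition i_q :: "real^4 \<Rightarrow> real" where
  "i_q x = - x$1 * sin (x$4) + x$2 * cos (x$4)"

end

theory Submission
  imports Defs
begin

(* Write the model as the voltage equation L(theta) I' = V - R I - omega Phi with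
   Phi = L'(theta) I + psi_r C'(theta), and differentiate this identity in omega and theta:
   L dI'/domega = -Phi and L dI'/dtheta = -L' I' - omega dPhi/dtheta.  Hence
   det L * Delta_y1 = det [L dI'/domega, L dI'/dtheta] is an explicit polynomial in the state
   and in I', and det L = Ld Lq gives the formula for Delta_y1.  Differentiating the phase
   relation Psi_Od sin theta_O = Psi_Oq cos theta_O along the flow turns it into
   Delta_y1 = |Psi_O|^2 (omega - dtheta_O/dt) / (Ld Lq).  The rows of the Jacobian of
   (h, L_f h) are among the rows of the observability matrix, so Delta_y1 <> 0 gives the
   rank condition. *)

lemma det_4:
  "det (A::'a::comm_ring_1^4^4) =
     A$1$1*A$2$2*A$3$3*A$4$4 - A$1$1*A$2$2*A$3$4*A$4$3 - A$1$1*A$2$3*A$3$2*A$4$4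
   + A$1$1*A$2$3*A$3$4*A$4$2 + A$1$1*A$2$4*A$3$2*A$4$3 - A$1$1*A$2$4*A$3$3*A$4$2
   - A$1$2*A$2$1*A$3$3*A$4$4 + A$1$2*A$2$1*A$3$4*A$4$3 + A$1$2*A$2$3*A$3$1*A$4$4
   - A$1$2*A$2$3*A$3$4*A$4$1 - A$1$2*A$2$4*A$3$1*A$4$3 + A$1$2*A$2$4*A$3$3*A$4$1
   + A$1$3*A$2$1*A$3$2*A$4$4 - A$1$3*A$2$1*A$3$4*A$4$2 - A$1$3*A$2$2*A$3$1*A$4$4
   + A$1$3*A$2$2*A$3$4*A$4$1 + A$1$3*A$2$4*A$3$1*A$4$2 - A$1$3*A$2$4*A$3$2*A$4$1
   - A$1$4*A$2$1*A$3$2*A$4$3 + A$1$4*A$2$1*A$3$3*A$4$2 + A$1$4*A$2$2*A$3$1*A$4$3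
   - A$1$4*A$2$2*A$3$3*A$4$1 - A$1$4*A$2$3*A$3$1*A$4$2 + A$1$4*A$2$3*A$3$2*A$4$1"
proof -
  have f1: "finite {2::4, 3, 4}" "1 \<notin> {2::4, 3, 4}" by auto
  have f2: "finite {3::4, 4}" "2 \<notin> {3::4, 4}" by auto
  have f3: "finite {4::4}" "3 \<notin> {4::4}" by auto
  show ?thesis
    unfolding det_def UNIV_4
    unfolding sum_over_permutations_insert[OF f1] sum_over_permutations_insert[OF f2]
      sum_over_permutations_insert[OF f3] permutes_sing
    by (simp add: sign_swap_id permutation_swap_id sign_compose permutation_compose sign_id
        swap_id_eq algebra_simps)
qed

lemma vector_4 [simp]:
  "(vector [x1, x2, x3, x4] :: 'a::zero^4) $ 1 = x1"
  "(vector [x1, x2, x3, x4] :: 'a::zero^4) $ 2 = x2"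
  "(vector [x1, x2, x3, x4] :: 'a::zero^4) $ 3 = x3"
  "(vector [x1, x2, x3, x4] :: 'a::zero^4) $ 4 = x4"
  by (simp_all add: vector_def)

lemma cramer_2:
  fixes a b c d e f x y :: "'a::field"
  assumes "a * d - b * c \<noteq> 0" "a * x + b * y = e" "c * x + d * y = f"
  shows "x = (d * e - b * f) / (a * d - b * c)" and "y = (a * f - c * e) / (a * d - b * c)"
  using assms by (auto simp: field_simps)

lemma matrix_vector_mul_inv_right:
  fixes A :: "'a::semiring_1^'n^'m"
  assumes "invertible A"
  shows "A *v (matrix_inv A *v y) = y"
proof -
  have "A ** matrix_inv A = mat 1 \<and> matrix_inv A ** A = mat 1"
    using assms unfolding invertible_def matrix_inv_def by (rule someI_ex)
  then show ?thesis by (simp add: matrix_vector_mul_assoc)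
qed

lemmas has_derivative_vec_nth [derivative_intros] =
  bounded_linear.has_derivative[OF bounded_linear_vec_nth]

lemma has_derivative_vecI:
  fixes f :: "'a::real_normed_vector \<Rightarrow> real^'n"
  assumes "\<And>i. ((\<lambda>x. f x $ i) has_derivative (\<lambda>h. f' h $ i)) (at a)"
  shows "(f has_derivative f') (at a)"
  using assms by (subst has_derivative_componentwise_within) (auto simp: Basis_vec_def inner_axis)

lemma has_derivative_vector_2:
  fixes g1 g2 :: "'a::real_normed_vector \<Rightarrow> real"
  assumes "(g1 has_derivative D1) (at x)" and "(g2 has_derivative D2) (at x)"
  shows "((\<lambda>z. vector [g1 z, g2 z] :: real^2) has_derivative (\<lambda>h. vector [D1 h, D2 h])) (at x)"
proof (rule has_derivative_vecI)
  show "((\<lambda>z. (vector [g1 z, g2 z] :: real^2) $ i) has_derivative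
           (\<lambda>h. (vector [D1 h, D2 h] :: real^2) $ i)) (at x)" for i :: 2
    using exhaust_2[of i] assms by auto
qed

lemma has_derivative_vector_4:
  fixes g1 g2 g3 g4 :: "'a::real_normed_vector \<Rightarrow> real"
  assumes "(g1 has_derivative D1) (at x)" and "(g2 has_derivative D2) (at x)"
    and "(g3 has_derivative D3) (at x)" and "(g4 has_derivative D4) (at x)"
  shows "((\<lambda>z. vector [g1 z, g2 z, g3 z, g4 z] :: real^4) has_derivative
           (\<lambda>h. vector [D1 h, D2 h, D3 h, D4 h])) (at x)"
proof (rule has_derivative_vecI)
  show "((\<lambda>z. (vector [g1 z, g2 z, g3 z, g4 z] :: real^4) $ i) has_derivative
           (\<lambda>h. (vector [D1 h, D2 h, D3 h, D4 h] :: real^4) $ i)) (at x)" for i :: 4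
    using exhaust_4[of i] assms by auto
qed

lemma jacobian_vector_2:
  fixes g1 g2 :: "real^'n \<Rightarrow> real"
  assumes "(g1 has_derivative D1) (at x)" and "(g2 has_derivative D2) (at x)"
  shows "jacobian (\<lambda>z. vector [g1 z, g2 z] :: real^2) (at x) = matrix (\<lambda>h. vector [D1 h, D2 h])"
  unfolding jacobian_def frechet_derivative_at[OF has_derivative_vector_2[OF assms], symmetric] ..

lemma jacobian_coords_12:
  fixes g1 g2 :: "real^4 \<Rightarrow> real"
  assumes "(g1 has_derivative D1) (at x)" and "(g2 has_derivative D2) (at x)"
  shows "jacobian (\<lambda>z. vector [z$1, z$2, g1 z, g2 z] :: real^4) (at x)
           = matrix (\<lambda>h. vector [h$1, h$2, D1 h, D2 h])"
proof -
  have "((\<lambda>z. vector [z$1, z$2, g1 z, g2 z] :: real^4) has_derivative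
          (\<lambda>h. vector [h$1, h$2, D1 h, D2 h])) (at x)"
    by (intro has_derivative_vector_4 assms has_derivative_vec_nth has_derivative_ident)
  from frechet_derivative_at[OF this] show ?thesis
    unfolding jacobian_def by simp
qed

lemma det_jacobian_coords_12:
  fixes g1 g2 :: "real^4 \<Rightarrow> real"
  assumes "(g1 has_derivative D1) (at x)" and "(g2 has_derivative D2) (at x)"
  shows "det (jacobian (\<lambda>z. vector [z$1, z$2, g1 z, g2 z] :: real^4) (at x))
           = D1 (axis 3 1) * D2 (axis 4 1) - D1 (axis 4 1) * D2 (axis 3 1)"
proof -
  have "matrix (\<lambda>h. vector [h$1, h$2, D1 h, D2 h] :: real^4) $ i $ j
      = (vector [axis j 1 $ 1, axis j 1 $ 2, D1 (axis j 1), D2 (axis j 1)] :: real^4) $ i"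
    for i j :: 4
    by (simp add: matrix_def)
  then show ?thesis
    unfolding jacobian_coords_12[OF assms] det_4 by (simp add: axis_def)
qed

lemma frechet_derivative_phase:
  fixes \<Psi>d \<Psi>q \<phi> :: "'a::real_normed_vector \<Rightarrow> real"
  assumes d: "(\<Psi>d has_derivative D\<Psi>d) (at x)" and q: "(\<Psi>q has_derivative D\<Psi>q) (at x)"
    and \<phi>: "\<phi> differentiable (at x)" and e: "e > 0"
    and phase: "\<forall>z. dist z x < e \<longrightarrow> \<Psi>d z * sin (\<phi> z) = \<Psi>q z * cos (\<phi> z)"
  shows "frechet_derivative \<phi> (at x) v * ((\<Psi>d x)^2 + (\<Psi>q x)^2) = \<Psi>d x * D\<Psi>q v - \<Psi>q x * D\<Psi>d v"
proof -
  let ?D\<phi> = "frechet_derivative \<phi> (at x)"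
  have d\<phi>: "(\<phi> has_derivative ?D\<phi>) (at x)"
    using \<phi> frechet_derivative_works by blast
  have "((\<lambda>z. \<Psi>d z * sin (\<phi> z)) has_derivative
      (\<lambda>h. \<Psi>d x * (?D\<phi> h * cos (\<phi> x)) + D\<Psi>d h * sin (\<phi> x))) (at x)"
    by (rule has_derivative_eq_rhs, (rule has_derivative_mult has_derivative_sin d d\<phi>)+, simp)
  moreover have "((\<lambda>z. \<Psi>d z * sin (\<phi> z)) has_derivative
      (\<lambda>h. \<Psi>q x * (?D\<phi> h * - sin (\<phi> x)) + D\<Psi>q h * cos (\<phi> x))) (at x)"
  proof (rule has_derivative_transform_within[OF _ e])
    show "((\<lambda>z. \<Psi>q z * cos (\<phi> z)) has_derivative
        (\<lambda>h. \<Psi>q x * (?D\<phi> h * - sin (\<phi> x)) + D\<Psi>q h * cos (\<phi> x))) (at x)"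
      by (rule has_derivative_eq_rhs, (rule has_derivative_mult has_derivative_cos q d\<phi>)+, simp)
  qed (use phase e in auto)
  ultimately have "\<Psi>d x * (?D\<phi> v * cos (\<phi> x)) + D\<Psi>d v * sin (\<phi> x)
      = \<Psi>q x * (?D\<phi> v * - sin (\<phi> x)) + D\<Psi>q v * cos (\<phi> x)"
    by (rule fun_cong[OF has_derivative_unique])
  moreover have "\<Psi>d x * sin (\<phi> x) = \<Psi>q x * cos (\<phi> x)"
    using phase e by simp
  ultimately show ?thesis
    using sin_cos_squared_add[of "\<phi> x"] by algebra
qed

lemma lie_ipmsm_h: "lie F ipmsm_h = (\<lambda>z. vector [F z $ 1, F z $ 2])"
proof -
  have "frechet_derivative ipmsm_h (at z) = ipmsm_h" for z
    unfolding ipmsm_h_def[abs_def]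
    by (intro frechet_derivative_at[symmetric] has_derivative_vector_2 has_derivative_vec_nth
        has_derivative_ident)
  then show ?thesis
    unfolding lie_def by (simp add: ipmsm_h_def)
qed

lemma obs_rank_condition_ipmsm_hI:
  fixes F :: "real^4 \<Rightarrow> real^4"
  assumes dF1: "((\<lambda>z. F z $ 1) has_derivative P1) (at x)"
    and dF2: "((\<lambda>z. F z $ 2) has_derivative P2) (at x)"
    and det: "det (jacobian (\<lambda>z. vector [z$1, z$2, F z $ 1, F z $ 2] :: real^4) (at x)) \<noteq> 0"
  shows "obs_rank_condition F ipmsm_h x"
proof -
  let ?A = "jacobian (\<lambda>z. vector [z$1, z$2, F z $ 1, F z $ 2] :: real^4) (at x)"
  let ?J = "\<lambda>k. jacobian (lie_iter F ipmsm_h k) (at x)"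
  let ?U = "\<Union>k<CARD(4). rows (?J k)"
  have J0: "?J 0 = matrix (\<lambda>h. vector [h$1, h$2])"
    unfolding lie_iter.simps ipmsm_h_def[abs_def]
    by (intro jacobian_vector_2 has_derivative_vec_nth has_derivative_ident)
  have J1: "?J 1 = matrix (\<lambda>h. vector [P1 h, P2 h])"
    using jacobian_vector_2[OF dF1 dF2] by (simp add: lie_ipmsm_h)
  have "row 1 ?A = row 1 (?J 0)" "row 2 ?A = row 2 (?J 0)"
    "row 3 ?A = row 1 (?J 1)" "row 4 ?A = row 2 (?J 1)"
    unfolding jacobian_coords_12[OF dF1 dF2] J0 J1 by (simp_all add: row_def matrix_def)
  then have "row i ?A \<in> rows (?J 0) \<union> rows (?J 1)" for i
    using exhaust_4[of i] by (auto simp: rows_def)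
  then have "rows ?A \<subseteq> rows (?J 0) \<union> rows (?J 1)"
    unfolding rows_def[of ?A] by blast
  also have "\<dots> \<subseteq> ?U"
    by (intro Un_least UN_upper) simp_all
  finally have "dim (rows ?A) \<le> dim ?U"
    by (rule dim_subset)
  moreover have "dim (rows ?A) = CARD(4)"
    using det det_eq_0_rank[of ?A] rank_bound[of ?A] unfolding row_rank_def by simp
  moreover have "dim ?U \<le> CARD(4)"
    by (rule dim_subset_UNIV_cart)
  ultimately show ?thesis
    unfolding obs_rank_condition_def by linarith
qed

lemma has_derivative_i_d:
  "(i_d has_derivative (\<lambda>h. h$1 * cos (x$4) + h$2 * sin (x$4) + i_q x * h$4)) (at x)"
  unfolding i_d_def
  by (rule has_derivative_eq_rhs, (rule has_derivative_add has_derivative_mult has_derivative_sin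
      has_derivative_cos has_derivative_vec_nth has_derivative_ident)+,
      simp add: fun_eq_iff i_q_def algebra_simps)

lemma has_derivative_i_q:
  "(i_q has_derivative (\<lambda>h. - h$1 * sin (x$4) + h$2 * cos (x$4) - i_d x * h$4)) (at x)"
  unfolding i_q_def
  by (rule has_derivative_eq_rhs, (rule has_derivative_add has_derivative_mult has_derivative_minus
      has_derivative_sin has_derivative_cos has_derivative_vec_nth has_derivative_ident)+,
      simp add: fun_eq_iff i_d_def algebra_simps)

lemma lie_i_d: "lie F i_d x = F x $ 1 * cos (x$4) + F x $ 2 * sin (x$4) + i_q x * F x $ 4"
  unfolding lie_def frechet_derivative_at[OF has_derivative_i_d, symmetric] ..

lemma lie_i_q: "lie F i_q x = - F x $ 1 * sin (x$4) + F x $ 2 * cos (x$4) - i_d x * F x $ 4"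
  unfolding lie_def frechet_derivative_at[OF has_derivative_i_q, symmetric] ..

lemma det_Lmat: "det (Lmat L0 L2 \<theta>) = L0^2 - L2^2"
proof -
  have "det (Lmat L0 L2 \<theta>) = (L0 + L2 * cos (2*\<theta>)) * (L0 - L2 * cos (2*\<theta>)) - (L2 * sin (2*\<theta>))^2"
    by (simp add: Lmat_def det_2 power2_eq_square)
  also have "\<dots> = L0^2 - L2^2"
    using sin_cos_squared_add[of "2*\<theta>"] by algebra
  finally show ?thesis .
qed

lemma ipmsm_voltage_equation:
  fixes R \<psi>r p J Tl L0 L2 :: real and x :: "real^4" and u :: "real^2"
  assumes "L0^2 - L2^2 \<noteq> 0"
  defines "F \<equiv> ipmsm_f R \<psi>r p J Tl L0 L2 x u" and "c2 \<equiv> cos (2 * x$4)" and "s2 \<equiv> sin (2 * x$4)"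
  shows "(L0 + L2 * c2) * F$1 + L2 * s2 * F$2
           = u$1 - R * x$1 - x$3 * (- 2 * L2 * s2 * x$1 + 2 * L2 * c2 * x$2) + \<psi>r * x$3 * sin (x$4)"
    and "L2 * s2 * F$1 + (L0 - L2 * c2) * F$2
           = u$2 - R * x$2 - x$3 * (2 * L2 * c2 * x$1 + 2 * L2 * s2 * x$2) - \<psi>r * x$3 * cos (x$4)"
proof -
  let ?L = "Lmat L0 L2 (x$4)"
  let ?b = "u - (R *\<^sub>R vector [x$1, x$2] + x$3 *\<^sub>R (dLmat L2 (x$4) *v vector [x$1, x$2]))
              - (\<psi>r * x$3) *\<^sub>R Cp (x$4)"
  have "vector [F$1, F$2] = matrix_inv ?L *v ?b"
    by (simp add: F_def ipmsm_f_def Let_def vec_eq_iff forall_2)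
  then have "?L *v vector [F$1, F$2] = ?b"
    using assms(1) by (simp add: matrix_vector_mul_inv_right invertible_det_nz det_Lmat)
  then show "(L0 + L2 * c2) * F$1 + L2 * s2 * F$2
           = u$1 - R * x$1 - x$3 * (- 2 * L2 * s2 * x$1 + 2 * L2 * c2 * x$2) + \<psi>r * x$3 * sin (x$4)"
    and "L2 * s2 * F$1 + (L0 - L2 * c2) * F$2
           = u$2 - R * x$2 - x$3 * (2 * L2 * c2 * x$1 + 2 * L2 * s2 * x$2) - \<psi>r * x$3 * cos (x$4)"
    by (auto simp: vec_eq_iff forall_2 Lmat_def dLmat_def Cp_def matrix_vector_mult_def sum_2
        c2_def s2_def algebra_simps)
qed

lemma ipmsm_f_nth_4: "ipmsm_f R \<psi>r p J Tl L0 L2 x u $ 4 = x$3"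
  by (simp add: ipmsm_f_def Let_def)

lemma ipmsm_current_rate_differentiable:
  fixes R \<psi>r p J Tl L0 L2 :: real and u :: "real^2"
  assumes D: "L0^2 - L2^2 \<noteq> 0"
  shows "(\<lambda>z. ipmsm_f R \<psi>r p J Tl L0 L2 z u $ 1) differentiable (at x)"
    and "(\<lambda>z. ipmsm_f R \<psi>r p J Tl L0 L2 z u $ 2) differentiable (at x)"
proof -
  have det: "(L0 + L2 * cos (2 * z$4)) * (L0 - L2 * cos (2 * z$4))
      - L2 * sin (2 * z$4) * (L2 * sin (2 * z$4)) = L0^2 - L2^2" for z :: "real^4"
    using det_Lmat[of L0 L2 "z$4"] by (simp add: Lmat_def det_2)
  note cramer = cramer_2[OF _ ipmsm_voltage_equation[OF D], unfolded det, OF D]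
  show "(\<lambda>z. ipmsm_f R \<psi>r p J Tl L0 L2 z u $ 1) differentiable (at x)"
       "(\<lambda>z. ipmsm_f R \<psi>r p J Tl L0 L2 z u $ 2) differentiable (at x)"
    unfolding cramer differentiable_def
    by (rule exI, (rule has_derivative_add has_derivative_diff has_derivative_mult
        has_derivative_minus has_derivative_divide' has_derivative_sin has_derivative_cos
        has_derivative_vec_nth has_derivative_ident has_derivative_const D)+)+
qed

text \<open>Implicit differentiation of the voltage equation, which avoids differentiating the inverse
  of the inductance matrix.\<close>

lemma ipmsm_voltage_equation_partials_1:
  fixes R \<psi>r L0 L2 :: real and x :: "real^4" and u :: "real^2" and F :: "real^4 \<Rightarrow> real^4"
  assumes V: "\<And>z. (L0 + L2 * cos (2 * z$4)) * F z $ 1 + L2 * sin (2 * z$4) * F z $ 2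
      = u$1 - R * z$1 - z$3 * (- 2 * L2 * sin (2 * z$4) * z$1 + 2 * L2 * cos (2 * z$4) * z$2)
        + \<psi>r * z$3 * sin (z$4)"
    and dF1: "((\<lambda>z. F z $ 1) has_derivative P1) (at x)"
    and dF2: "((\<lambda>z. F z $ 2) has_derivative P2) (at x)"
  defines "c2 \<equiv> cos (2 * x$4)" and "s2 \<equiv> sin (2 * x$4)"
  shows "(L0 + L2 * c2) * P1 (axis 3 1) + L2 * s2 * P2 (axis 3 1)
           = 2 * L2 * s2 * x$1 - 2 * L2 * c2 * x$2 + \<psi>r * sin (x$4)"
    and "(L0 + L2 * c2) * P1 (axis 4 1) + L2 * s2 * P2 (axis 4 1)
           - 2 * L2 * s2 * F x $ 1 + 2 * L2 * c2 * F x $ 2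
           = x$3 * (4 * L2 * c2 * x$1 + 4 * L2 * s2 * x$2 + \<psi>r * cos (x$4))"
proof -
  note rules = has_derivative_add has_derivative_diff has_derivative_mult has_derivative_minus
    has_derivative_sin has_derivative_cos has_derivative_vec_nth has_derivative_ident
    has_derivative_const
  let ?V = "\<lambda>z. (L0 + L2 * cos (2 * z$4)) * F z $ 1 + L2 * sin (2 * z$4) * F z $ 2"
  have "(?V has_derivative (\<lambda>h. (L0 + L2 * c2) * P1 h + L2 * s2 * P2 h
      + h$4 * (- 2 * L2 * s2 * F x $ 1 + 2 * L2 * c2 * F x $ 2))) (at x)"
    by (rule has_derivative_eq_rhs, (rule rules dF1 dF2)+,
        simp add: fun_eq_iff c2_def s2_def algebra_simps)
  moreover have "(?V has_derivative (\<lambda>h. - R * h$1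
      - h$3 * (- 2 * L2 * s2 * x$1 + 2 * L2 * c2 * x$2 - \<psi>r * sin (x$4))
      - x$3 * (- 2 * L2 * s2 * h$1 + 2 * L2 * c2 * h$2)
      + x$3 * h$4 * (4 * L2 * c2 * x$1 + 4 * L2 * s2 * x$2 + \<psi>r * cos (x$4)))) (at x)"
    unfolding V
    by (rule has_derivative_eq_rhs, (rule rules)+, simp add: fun_eq_iff c2_def s2_def algebra_simps)
  ultimately have D: "(\<lambda>h. (L0 + L2 * c2) * P1 h + L2 * s2 * P2 h
      + h$4 * (- 2 * L2 * s2 * F x $ 1 + 2 * L2 * c2 * F x $ 2))
    = (\<lambda>h. - R * h$1 - h$3 * (- 2 * L2 * s2 * x$1 + 2 * L2 * c2 * x$2 - \<psi>r * sin (x$4))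
      - x$3 * (- 2 * L2 * s2 * h$1 + 2 * L2 * c2 * h$2)
      + x$3 * h$4 * (4 * L2 * c2 * x$1 + 4 * L2 * s2 * x$2 + \<psi>r * cos (x$4)))"
    by (rule has_derivative_unique)
  from fun_cong[OF D, of "axis 3 1"] fun_cong[OF D, of "axis 4 1"] show
    "(L0 + L2 * c2) * P1 (axis 3 1) + L2 * s2 * P2 (axis 3 1)
       = 2 * L2 * s2 * x$1 - 2 * L2 * c2 * x$2 + \<psi>r * sin (x$4)"
    "(L0 + L2 * c2) * P1 (axis 4 1) + L2 * s2 * P2 (axis 4 1)
       - 2 * L2 * s2 * F x $ 1 + 2 * L2 * c2 * F x $ 2
       = x$3 * (4 * L2 * c2 * x$1 + 4 * L2 * s2 * x$2 + \<psi>r * cos (x$4))"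
    by (simp_all add: axis_def algebra_simps)
qed

lemma ipmsm_voltage_equation_partials_2:
  fixes R \<psi>r L0 L2 :: real and x :: "real^4" and u :: "real^2" and F :: "real^4 \<Rightarrow> real^4"
  assumes V: "\<And>z. L2 * sin (2 * z$4) * F z $ 1 + (L0 - L2 * cos (2 * z$4)) * F z $ 2
      = u$2 - R * z$2 - z$3 * (2 * L2 * cos (2 * z$4) * z$1 + 2 * L2 * sin (2 * z$4) * z$2)
        - \<psi>r * z$3 * cos (z$4)"
    and dF1: "((\<lambda>z. F z $ 1) has_derivative P1) (at x)"
    and dF2: "((\<lambda>z. F z $ 2) has_derivative P2) (at x)"
  defines "c2 \<equiv> cos (2 * x$4)" and "s2 \<equiv> sin (2 * x$4)"
  shows "L2 * s2 * P1 (axis 3 1) + (L0 - L2 * c2) * P2 (axis 3 1)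
           = - 2 * L2 * c2 * x$1 - 2 * L2 * s2 * x$2 - \<psi>r * cos (x$4)"
    and "L2 * s2 * P1 (axis 4 1) + (L0 - L2 * c2) * P2 (axis 4 1)
           + 2 * L2 * c2 * F x $ 1 + 2 * L2 * s2 * F x $ 2
           = x$3 * (4 * L2 * s2 * x$1 - 4 * L2 * c2 * x$2 + \<psi>r * sin (x$4))"
proof -
  note rules = has_derivative_add has_derivative_diff has_derivative_mult has_derivative_minus
    has_derivative_sin has_derivative_cos has_derivative_vec_nth has_derivative_ident
    has_derivative_const
  let ?V = "\<lambda>z. L2 * sin (2 * z$4) * F z $ 1 + (L0 - L2 * cos (2 * z$4)) * F z $ 2"
  have "(?V has_derivative (\<lambda>h. L2 * s2 * P1 h + (L0 - L2 * c2) * P2 h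
      + h$4 * (2 * L2 * c2 * F x $ 1 + 2 * L2 * s2 * F x $ 2))) (at x)"
    by (rule has_derivative_eq_rhs, (rule rules dF1 dF2)+,
        simp add: fun_eq_iff c2_def s2_def algebra_simps)
  moreover have "(?V has_derivative (\<lambda>h. - R * h$2
      - h$3 * (2 * L2 * c2 * x$1 + 2 * L2 * s2 * x$2 + \<psi>r * cos (x$4))
      - x$3 * (2 * L2 * c2 * h$1 + 2 * L2 * s2 * h$2)
      + x$3 * h$4 * (4 * L2 * s2 * x$1 - 4 * L2 * c2 * x$2 + \<psi>r * sin (x$4)))) (at x)"
    unfolding V
    by (rule has_derivative_eq_rhs, (rule rules)+, simp add: fun_eq_iff c2_def s2_def algebra_simps)
  ultimately have D: "(\<lambda>h. L2 * s2 * P1 h + (L0 - L2 * c2) * P2 h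
      + h$4 * (2 * L2 * c2 * F x $ 1 + 2 * L2 * s2 * F x $ 2))
    = (\<lambda>h. - R * h$2 - h$3 * (2 * L2 * c2 * x$1 + 2 * L2 * s2 * x$2 + \<psi>r * cos (x$4))
      - x$3 * (2 * L2 * c2 * h$1 + 2 * L2 * s2 * h$2)
      + x$3 * h$4 * (4 * L2 * s2 * x$1 - 4 * L2 * c2 * x$2 + \<psi>r * sin (x$4)))"
    by (rule has_derivative_unique)
  from fun_cong[OF D, of "axis 3 1"] fun_cong[OF D, of "axis 4 1"] show
    "L2 * s2 * P1 (axis 3 1) + (L0 - L2 * c2) * P2 (axis 3 1)
       = - 2 * L2 * c2 * x$1 - 2 * L2 * s2 * x$2 - \<psi>r * cos (x$4)"
    "L2 * s2 * P1 (axis 4 1) + (L0 - L2 * c2) * P2 (axis 4 1)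
       + 2 * L2 * c2 * F x $ 1 + 2 * L2 * s2 * F x $ 2
       = x$3 * (4 * L2 * s2 * x$1 - 4 * L2 * c2 * x$2 + \<psi>r * sin (x$4))"
    by (simp_all add: axis_def algebra_simps)
qed

lemma ipmsm_current_partials_minor:
  fixes L0 L2 \<psi> a b w c s c2 s2 F1 F2 p1 p2 q1 q2 :: real
  assumes cs: "c^2 + s^2 = 1" "c2 = c^2 - s^2" "s2 = 2 * s * c"
    and E1: "(L0 + L2 * c2) * p1 + L2 * s2 * p2 = 2 * L2 * s2 * a - 2 * L2 * c2 * b + \<psi> * s"
    and E2: "L2 * s2 * p1 + (L0 - L2 * c2) * p2 = - 2 * L2 * c2 * a - 2 * L2 * s2 * b - \<psi> * c"
    and E3: "(L0 + L2 * c2) * q1 + L2 * s2 * q2 - 2 * L2 * s2 * F1 + 2 * L2 * c2 * F2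
           = w * (4 * L2 * c2 * a + 4 * L2 * s2 * b + \<psi> * c)"
    and E4: "L2 * s2 * q1 + (L0 - L2 * c2) * q2 + 2 * L2 * c2 * F1 + 2 * L2 * s2 * F2
           = w * (4 * L2 * s2 * a - 4 * L2 * c2 * b + \<psi> * s)"
  shows "(L0^2 - L2^2) * (p1 * q2 - q1 * p2)
       = ((2 * L2 * (a * c + b * s) + \<psi>)^2 + (2 * L2 * (- a * s + b * c))^2) * w
         + 2 * L2 * (2 * L2 * (F1 * c + F2 * s + (- a * s + b * c) * w) * (- a * s + b * c)
                     - (2 * L2 * (a * c + b * s) + \<psi>) * (- F1 * s + F2 * c - (a * c + b * s) * w))"
proof -
  have "c2^2 + s2^2 = 1"
    using cs by algebra
  then have "(L0^2 - L2^2) * (p1 * q2 - q1 * p2)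
      = ((L0 + L2 * c2) * p1 + L2 * s2 * p2) * (L2 * s2 * q1 + (L0 - L2 * c2) * q2)
        - ((L0 + L2 * c2) * q1 + L2 * s2 * q2) * (L2 * s2 * p1 + (L0 - L2 * c2) * p2)"
    by algebra
  also have "\<dots> = ((2 * L2 * (a * c + b * s) + \<psi>)^2 + (2 * L2 * (- a * s + b * c))^2) * w
         + 2 * L2 * (2 * L2 * (F1 * c + F2 * s + (- a * s + b * c) * w) * (- a * s + b * c)
                     - (2 * L2 * (a * c + b * s) + \<psi>) * (- F1 * s + F2 * c - (a * c + b * s) * w))"
    using E1 E2 E3 E4 cs by algebra
  finally show ?thesis .
qed

lemma ipmsm_det_jacobian:
  fixes R \<psi>r p J Tl L0 L2 :: real and x :: "real^4" and u :: "real^2"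
  assumes D: "L0^2 - L2^2 \<noteq> 0"
  defines "F \<equiv> \<lambda>z. ipmsm_f R \<psi>r p J Tl L0 L2 z u"
  shows "(L0^2 - L2^2) * det (jacobian (\<lambda>z. vector [z$1, z$2, F z $ 1, F z $ 2] :: real^4) (at x))
    = ((2 * L2 * i_d x + \<psi>r)^2 + (2 * L2 * i_q x)^2) * x$3
      + 2 * L2 * (2 * L2 * lie F i_d x * i_q x - (2 * L2 * i_d x + \<psi>r) * lie F i_q x)"
proof -
  let ?P1 = "frechet_derivative (\<lambda>z. F z $ 1) (at x)"
  let ?P2 = "frechet_derivative (\<lambda>z. F z $ 2) (at x)"
  have dF1: "((\<lambda>z. F z $ 1) has_derivative ?P1) (at x)"
    using ipmsm_current_rate_differentiable(1)[OF D] unfolding F_def frechet_derivative_works .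
  have dF2: "((\<lambda>z. F z $ 2) has_derivative ?P2) (at x)"
    using ipmsm_current_rate_differentiable(2)[OF D] unfolding F_def frechet_derivative_works .
  have F_apply: "ipmsm_f R \<psi>r p J Tl L0 L2 z u = F z" for z
    unfolding F_def ..
  note voltage = ipmsm_voltage_equation[where R = R and \<psi>r = \<psi>r and p = p and J = J
      and Tl = Tl and u = u, OF D, unfolded F_apply]
  note row1 = ipmsm_voltage_equation_partials_1[OF voltage(1) dF1 dF2, unfolded F_def]
  note row2 = ipmsm_voltage_equation_partials_2[OF voltage(2) dF1 dF2, unfolded F_def]
  show ?thesis
    unfolding det_jacobian_coords_12[OF dF1 dF2] lie_i_d lie_i_q
    unfolding F_def ipmsm_f_nth_4 i_d_def i_q_def
    by (rule ipmsm_current_partials_minor[OF sin_cos_squared_add2 cos_double sin_double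
          row1(1) row2(1) row1(2) row2(2)])
qed

lemma ipmsm_det_jacobian_phase:
  fixes R \<psi>r p J Tl L0 L2 e :: real and x :: "real^4" and u :: "real^2" and \<phi> :: "real^4 \<Rightarrow> real"
  assumes D: "L0^2 - L2^2 \<noteq> 0" and \<phi>: "\<phi> differentiable (at x)" and e: "e > 0"
    and phase: "\<forall>z. dist z x < e \<longrightarrow> (2 * L2 * i_d z + \<psi>r) * sin (\<phi> z) = 2 * L2 * i_q z * cos (\<phi> z)"
  defines "F \<equiv> \<lambda>z. ipmsm_f R \<psi>r p J Tl L0 L2 z u"
  shows "(L0^2 - L2^2) * det (jacobian (\<lambda>z. vector [z$1, z$2, F z $ 1, F z $ 2] :: real^4) (at x))
    = ((2 * L2 * i_d x + \<psi>r)^2 + (2 * L2 * i_q x)^2) * (x$3 - lie F \<phi> x)"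
proof -
  have "((\<lambda>z. 2 * L2 * i_d z + \<psi>r) has_derivative
      (\<lambda>h. 2 * L2 * (h$1 * cos (x$4) + h$2 * sin (x$4) + i_q x * h$4))) (at x)"
    by (rule has_derivative_eq_rhs, (rule has_derivative_add has_derivative_mult
        has_derivative_const has_derivative_i_d)+, simp)
  moreover have "((\<lambda>z. 2 * L2 * i_q z) has_derivative
      (\<lambda>h. 2 * L2 * (- h$1 * sin (x$4) + h$2 * cos (x$4) - i_d x * h$4))) (at x)"
    by (rule has_derivative_eq_rhs,
        (rule has_derivative_mult has_derivative_const has_derivative_i_q)+, simp)
  ultimately have "lie F \<phi> x * ((2 * L2 * i_d x + \<psi>r)^2 + (2 * L2 * i_q x)^2)
      = (2 * L2 * i_d x + \<psi>r) * (2 * L2 * lie F i_q x) - 2 * L2 * i_q x * (2 * L2 * lie F i_d x)"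
    unfolding lie_def[of F \<phi>] lie_i_d lie_i_q
    using frechet_derivative_phase[OF _ _ \<phi> e phase] by simp
  then show ?thesis
    unfolding F_def ipmsm_det_jacobian[OF D] by algebra
qed

lemma ipmsm_obs_rank_condition:
  fixes R \<psi>r p J Tl L0 L2 e :: real and x :: "real^4" and u :: "real^2" and \<phi> :: "real^4 \<Rightarrow> real"
  assumes D: "L0^2 - L2^2 \<noteq> 0"
    and \<Psi>: "(2 * L2 * i_d x + \<psi>r, 2 * L2 * i_q x) \<noteq> (0, 0)"
    and \<phi>: "\<phi> differentiable (at x)" and e: "e > 0"
    and phase: "\<forall>z. dist z x < e \<longrightarrow> (2 * L2 * i_d z + \<psi>r) * sin (\<phi> z) = 2 * L2 * i_q z * cos (\<phi> z)"
    and \<omega>: "x$3 \<noteq> lie (\<lambda>z. ipmsm_f R \<psi>r p J Tl L0 L2 z u) \<phi> x"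
  shows "obs_rank_condition (\<lambda>z. ipmsm_f R \<psi>r p J Tl L0 L2 z u) ipmsm_h x"
proof (rule obs_rank_condition_ipmsm_hI)
  show "((\<lambda>z. ipmsm_f R \<psi>r p J Tl L0 L2 z u $ 1) has_derivative
      frechet_derivative (\<lambda>z. ipmsm_f R \<psi>r p J Tl L0 L2 z u $ 1) (at x)) (at x)"
    "((\<lambda>z. ipmsm_f R \<psi>r p J Tl L0 L2 z u $ 2) has_derivative
      frechet_derivative (\<lambda>z. ipmsm_f R \<psi>r p J Tl L0 L2 z u $ 2) (at x)) (at x)"
    using ipmsm_current_rate_differentiable[OF D] frechet_derivative_works by blast+
  have "(2 * L2 * i_d x + \<psi>r)^2 + (2 * L2 * i_q x)^2 \<noteq> 0"
    using \<Psi> by (simp add: sum_power2_eq_zero_iff)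
  with \<omega> have "(L0^2 - L2^2) * det (jacobian (\<lambda>z. vector [z$1, z$2,
      ipmsm_f R \<psi>r p J Tl L0 L2 z u $ 1, ipmsm_f R \<psi>r p J Tl L0 L2 z u $ 2] :: real^4) (at x)) \<noteq> 0"
    unfolding ipmsm_det_jacobian_phase[OF D \<phi> e phase] by simp
  then show "det (jacobian (\<lambda>z. vector [z$1, z$2, ipmsm_f R \<psi>r p J Tl L0 L2 z u $ 1,
      ipmsm_f R \<psi>r p J Tl L0 L2 z u $ 2] :: real^4) (at x)) \<noteq> 0"
    by simp
qed

theorem mainTheorem1:
  fixes R \<psi>r p J Tl L0 L2 :: real
  defines "Ld \<equiv> L0 + L2" and "Lq \<equiv> L0 - L2" and "L\<delta> \<equiv> (L0 + L2) - (L0 - L2)"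
  assumes hLd: "Ld \<noteq> 0" and hLq: "Lq \<noteq> 0"
  shows
    \<comment> \<open>determinant formula for Delta_y1\<close>
    "(\<forall>(x::real^4) (u::real^2).
       let F = (\<lambda>z. ipmsm_f R \<psi>r p J Tl L0 L2 z u);
           G = (\<lambda>z. vector [z$1, z$2, (lie F ipmsm_h z)$1, (lie F ipmsm_h z)$2] :: real^4);
           did = lie F i_d x; diq = lie F i_q x
       in det (jacobian G (at x)) =
          1 / (Ld * Lq) * ((L\<delta> * i_d x + \<psi>r)^2 + L\<delta>^2 * (i_q x)^2) * x$3
          + L\<delta> / (Ld * Lq) * (L\<delta> * did * i_q x - (L\<delta> * i_d x + \<psi>r) * diq))
     \<and>
     \<comment> \<open>rank condition when Psi_O \<noteq> 0 and omega \<noteq> d theta_O / dt\<close>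
     (\<forall>(x::real^4) (u::real^2) (\<phi>::real^4 \<Rightarrow> real) e.
       let F = (\<lambda>z. ipmsm_f R \<psi>r p J Tl L0 L2 z u);
           \<Psi>d = (\<lambda>z. L\<delta> * i_d z + \<psi>r); \<Psi>q = (\<lambda>z. L\<delta> * i_q z)
       in (\<Psi>d x, \<Psi>q x) \<noteq> (0, 0)
          \<and> \<phi> differentiable (at x)
          \<and> e > 0 \<and> (\<forall>z. dist z x < e \<longrightarrow> \<Psi>d z * sin (\<phi> z) = \<Psi>q z * cos (\<phi> z))
          \<and> x$3 \<noteq> lie F \<phi> x
          \<longrightarrow> obs_rank_condition F ipmsm_h x)
     \<and>
     \<comment> \<open>standstill: omega = 0 and the orientation of Psi_O changes\<close>
     (\<forall>(x::real^4) (u::real^2) (\<phi>::real^4 \<Rightarrow> real) e.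
       let F = (\<lambda>z. ipmsm_f R \<psi>r p J Tl L0 L2 z u);
           \<Psi>d = (\<lambda>z. L\<delta> * i_d z + \<psi>r); \<Psi>q = (\<lambda>z. L\<delta> * i_q z)
       in x$3 = 0 \<and> (\<Psi>d x, \<Psi>q x) \<noteq> (0, 0)
          \<and> \<phi> differentiable (at x)
          \<and> e > 0 \<and> (\<forall>z. dist z x < e \<longrightarrow> \<Psi>d z * sin (\<phi> z) = \<Psi>q z * cos (\<phi> z))
          \<and> lie F \<phi> x \<noteq> 0
          \<longrightarrow> obs_rank_condition F ipmsm_h x)"
proof -
  have LdLq: "Ld * Lq = L0^2 - L2^2"
    unfolding Ld_def Lq_def by (simp add: power2_eq_square algebra_simps)
  have D: "L0^2 - L2^2 \<noteq> 0"
    unfolding LdLq[symmetric] using hLd hLq by simp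
  have L\<delta>: "L\<delta> = 2 * L2"
    unfolding L\<delta>_def by simp
  have solve: "d = 1 / K * S * w + c / K * B"
    if "K \<noteq> 0" "K * d = S * w + c * B" for K d S w c B :: real
    using that by (simp add: field_simps)
  have det: "det (jacobian (\<lambda>z. vector [z$1, z$2, ipmsm_f R \<psi>r p J Tl L0 L2 z u $ 1,
      ipmsm_f R \<psi>r p J Tl L0 L2 z u $ 2] :: real^4) (at x))
    = 1 / (L0^2 - L2^2) * ((2 * L2 * i_d x + \<psi>r)^2 + (2 * L2)^2 * (i_q x)^2) * x$3
      + 2 * L2 / (L0^2 - L2^2) * (2 * L2 * lie (\<lambda>z. ipmsm_f R \<psi>r p J Tl L0 L2 z u) i_d x * i_q x
        - (2 * L2 * i_d x + \<psi>r) * lie (\<lambda>z. ipmsm_f R \<psi>r p J Tl L0 L2 z u) i_q x)" for x u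
    by (rule solve[OF D]) (use ipmsm_det_jacobian[OF D] in \<open>simp add: power_mult_distrib\<close>)
  show ?thesis
    unfolding Let_def lie_ipmsm_h vector_2 LdLq L\<delta>
    using det ipmsm_obs_rank_condition[OF D] by auto
qed

end
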